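(* Let $R\in\mathbb R$ and let $f:[0,R)\to\mathbb R$ be continuously differentiable and satisfy (h1) $f(0)>0$, $f'(0)=-1$; (h2) $f'$ is strictly increasing and convex; (h3) $f(t)<0$ for some $t\in(0,R)$. Let $\beta:=\sup_{t\in[0,R)}-f(t)$, $t_*:=\min f^{-1}(\{0\})$, $\bar\tau:=\sup\{t\in[0,R):f(t)<0\}$ and $\bar t:=\sup\{t\in[0,R):f'(t)<0\}$. Then: (i) $f'(t)<0$ for all $t\in[0,\bar t)$, and $f'(t)\ge0$ for all $t\in[0,R)\setminus[0,\bar t)$; (ii) $0<t_*<\bar t\le\bar\tau\le R$; (iii) $\beta=-\lim_{t\to\bar t^-}f(t)$ and $0<\beta<\bar t$. *)

theory Defs
  imports "HOL-Analysis.Analysis"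
begin

end

theory Submission
  imports Defs
begin

text \<open>
  Since \<open>f'\<close> is continuous and strictly increasing with \<open>f' 0 < 0\<close>, it is negative exactly
  on \<open>[0, tbar)\<close>; so \<open>f\<close> strictly decreases on \<open>[0, tbar]\<close> and increases afterwards.
  The first zero \<open>tstar\<close> must therefore lie in \<open>(0, tbar)\<close>, and \<open>f < 0\<close> on \<open>(tstar, tbar)\<close>
  gives \<open>tbar \<le> tau\<close>. Consequently \<open>-f\<close> attains its supremum \<open>beta\<close> as \<open>t \<rightarrow> tbar\<^sup>-\<close>.
  Finally \<open>f' > f' 0 = -1\<close> makes \<open>f t + t\<close> increasing, so \<open>beta \<le> tbar - f 0 < tbar\<close>.
\<close>

lemma neg_iff_less_Sup_neg:
  fixes g :: "real \<Rightarrow> real"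
  assumes mono: "strict_mono_on {a..<b} g" and cont: "continuous_on {a..<b} g"
    and ga: "g a < 0" and t: "t \<in> {a..<b}"
  shows "g t < 0 \<longleftrightarrow> t < Sup {s \<in> {a..<b}. g s < 0}"
proof -
  define S where "S = {s \<in> {a..<b}. g s < 0}"
  have "a \<in> S" using ga t by (simp add: S_def)
  have bdd: "bdd_above S" by (rule bdd_aboveI[of _ b]) (auto simp: S_def)
  show ?thesis unfolding S_def[symmetric]
  proof
    assume "g t < 0"
    then have "\<forall>\<^sub>F s in at t within {a..<b}. g s < 0"
      using cont t by (intro order_tendstoD(2)) (auto simp: continuous_on_def)
    then obtain d where d: "d > 0" "\<And>s. s \<in> {a..<b} \<Longrightarrow> s \<noteq> t \<Longrightarrow> dist s t < d \<Longrightarrow> g s < 0"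
      by (auto simp: eventually_at)
    define s where "s = min (t + d/2) ((t + b)/2)"
    have "s < b" unfolding s_def using t by (intro min.strict_coboundedI2) auto
    moreover have "t < s" "dist s t < d" using d t by (auto simp: s_def dist_real_def)
    ultimately have "s \<in> S" using d(2)[of s] t by (auto simp: S_def)
    with \<open>t < s\<close> show "t < Sup S" using bdd by (meson cSup_upper less_le_trans)
  next
    assume "t < Sup S"
    then obtain s where s: "s \<in> S" "t < s" using less_cSup_iff[OF _ bdd] \<open>a \<in> S\<close> by blast
    then have "g t < g s" using t by (intro strict_mono_onD[OF mono]) (auto simp: S_def)
    with s show "g t < 0" by (simp add: S_def)
  qed
qed

locale majorant =
  fixes f f' :: "real \<Rightarrow> real" and R :: real
  assumes deriv: "\<And>t. t \<in> {0..<R} \<Longrightarrow> (f has_real_derivative f' t) (at t within {0..<R})"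
    and continuous_deriv: "continuous_on {0..<R} f'"
    and f0_pos: "f 0 > 0" and f'0: "f' 0 = -1"
    and strict_mono_deriv: "strict_mono_on {0..<R} f'"
    and ex_neg: "\<exists>t\<in>{0<..<R}. f t < 0"
begin

definition tbar where "tbar = Sup {t \<in> {0..<R}. f' t < 0}"
definition tau where "tau = Sup {t \<in> {0..<R}. f t < 0}"
definition tstar where "tstar = (LEAST t. t \<in> {0..<R} \<and> f t = 0)"
definition beta where "beta = Sup ((\<lambda>t. - f t) ` {0..<R})"

lemma R_pos: "0 < R"
  using ex_neg by auto

lemma deriv_neg_iff: "t \<in> {0..<R} \<Longrightarrow> f' t < 0 \<longleftrightarrow> t < tbar"
  unfolding tbar_def using strict_mono_deriv continuous_deriv f'0
  by (intro neg_iff_less_Sup_neg) auto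

lemma tbar_pos: "0 < tbar"
  using deriv_neg_iff[of 0] R_pos f'0 by simp

lemma tbar_le_R: "tbar \<le> R"
  unfolding tbar_def using R_pos f'0 by (intro cSup_least) auto

lemma continuous_on_f: "continuous_on {0..<R} f"
  using deriv by (rule DERIV_continuous_on)

lemma deriv_at_interior:
  assumes "0 < t" "t < R"
  shows "(f has_real_derivative f' t) (at t)"
proof -
  have "at t within {0..<R} = at t"
    by (rule at_within_open_subset[of _ "{0<..<R}"]) (use assms in auto)
  then show ?thesis using deriv[of t] assms by simp
qed

lemma f_strict_decreasing:
  assumes "0 \<le> a" "a < b" "b \<le> tbar" "b < R"
  shows "f b < f a"
proof (rule DERIV_neg_imp_decreasing_open[OF \<open>a < b\<close>])
  fix x assume "a < x" "x < b"
  then show "\<exists>y. (f has_real_derivative y) (at x) \<and> y < 0"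
    using assms deriv_neg_iff[of x] by (intro exI[of _ "f' x"]) (auto intro: deriv_at_interior)
qed (use assms in \<open>auto intro: continuous_on_subset[OF continuous_on_f]\<close>)

lemma f_increasing:
  assumes "tbar \<le> a" "a \<le> b" "b < R"
  shows "f a \<le> f b"
proof (rule DERIV_nonneg_imp_increasing_open[OF \<open>a \<le> b\<close>])
  fix x assume "a < x" "x < b"
  moreover have "0 < x" using tbar_pos assms \<open>a < x\<close> by linarith
  ultimately show "\<exists>y. (f has_real_derivative y) (at x) \<and> y \<ge> 0"
    using assms deriv_neg_iff[of x] by (intro exI[of _ "f' x"]) (auto intro: deriv_at_interior)
qed (use assms tbar_pos in \<open>auto intro: continuous_on_subset[OF continuous_on_f]\<close>)

text \<open>\<open>f t + t\<close> is increasing because \<open>f' > f' 0 = -1\<close> on \<open>(0, R)\<close>.\<close>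
lemma neg_f_le:
  assumes "0 \<le> t" "t < R"
  shows "- f t \<le> t - f 0"
proof -
  have "f 0 + 0 \<le> f t + t"
  proof (rule DERIV_nonneg_imp_increasing_open[of 0 t "\<lambda>x. f x + x"])
    fix x assume x: "0 < x" "x < t"
    then have "f' 0 < f' x" using strict_mono_deriv assms by (auto simp: strict_mono_on_def)
    then show "\<exists>y. ((\<lambda>x. f x + x) has_real_derivative y) (at x) \<and> y \<ge> 0"
      using x assms f'0 by (intro exI[of _ "f' x + 1"]) (auto intro!: derivative_eq_intros deriv_at_interior)
  qed (use assms in \<open>auto intro!: continuous_intros continuous_on_subset[OF continuous_on_f]\<close>)
  then show ?thesis by linarith
qed

lemma ex_neg_upto_tbar: "\<exists>c. 0 < c \<and> c \<le> tbar \<and> c < R \<and> f c < 0"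
proof -
  obtain t where t: "0 < t" "t < R" "f t < 0" using ex_neg by auto
  show ?thesis
  proof (cases "t < tbar")
    case False
    then have "f tbar \<le> f t" using f_increasing t by simp
    then show ?thesis using t False tbar_pos by (intro exI[of _ tbar]) auto
  qed (use t in auto)
qed

lemma tstar: "f tstar = 0" "0 < tstar" "tstar < tbar"
proof -
  obtain c where c: "0 < c" "c \<le> tbar" "c < R" "f c < 0" using ex_neg_upto_tbar by blast
  have "continuous_on {0..c} f" using c by (intro continuous_on_subset[OF continuous_on_f]) auto
  then obtain z where z: "0 \<le> z" "z \<le> c" "f z = 0"
    using IVT2'[of f c 0 0] c f0_pos by auto
  have z_pos: "0 < z" and "z < c" using z c f0_pos by (auto simp: order.order_iff_strict)
  have "tstar = z" unfolding tstar_def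
  proof (rule Least_equality)
    show "z \<in> {0..<R} \<and> f z = 0" using z c by auto
    show "z \<le> y" if "y \<in> {0..<R} \<and> f y = 0" for y
      using f_strict_decreasing[of y z] that z c by force
  qed
  then show "f tstar = 0" "0 < tstar" "tstar < tbar" using z z_pos \<open>z < c\<close> c by auto
qed

lemma f_neg_after_tstar: "tstar < t \<Longrightarrow> t \<le> tbar \<Longrightarrow> t < R \<Longrightarrow> f t < 0"
  using f_strict_decreasing[of tstar t] tstar by simp

lemma tbar_le_tau: "tbar \<le> tau"
proof (rule dense_le_bounded[OF tstar(3)])
  fix t assume t: "tstar < t" "t < tbar"
  then have "t \<in> {t \<in> {0..<R}. f t < 0}"
    using tstar tbar_le_R f_neg_after_tstar[of t] by auto
  then show "t \<le> tau" unfolding tau_def by (rule cSup_upper) (rule bdd_aboveI[of _ R], auto)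
qed

lemma tau_le_R: "tau \<le> R"
  unfolding tau_def using ex_neg by (intro cSup_least) auto

lemma at_left_tbar: "at tbar within {0..<tbar} = at_left tbar"
  by (rule at_within_nhd[of _ "{0<..}"]) (use tbar_pos in auto)

lemma tendsto_Sup_below_tbar:
  "((\<lambda>t. - f t) \<longlongrightarrow> Sup ((\<lambda>t. - f t) ` {0..<tbar})) (at_left tbar)"
proof -
  have "{..<tbar} \<inter> {0..<tbar} = {0..<tbar}" by auto
  moreover have "((\<lambda>t. - f t) \<longlongrightarrow> Sup ((\<lambda>t. - f t) ` ({..<tbar} \<inter> {0..<tbar})))
      (at tbar within ({..<tbar} \<inter> {0..<tbar}))"
    using f_strict_decreasing tbar_le_R neg_f_le
    by (intro Lim_left_bound[where K = "tbar - f 0"]) (force simp: le_less)+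
  ultimately show ?thesis using at_left_tbar by simp
qed

text \<open>For \<open>t \<ge> tbar\<close> the value \<open>- f t\<close> is dominated by \<open>- f tbar\<close>, the left limit at \<open>tbar\<close>.\<close>
lemma beta_eq_Sup_below_tbar: "beta = Sup ((\<lambda>t. - f t) ` {0..<tbar})"
proof (cases "tbar < R")
  case True
  define M where "M = Sup ((\<lambda>t. - f t) ` {0..<tbar})"
  have "((\<lambda>t. - f t) \<longlongrightarrow> - f tbar) (at_left tbar)"
  proof -
    have "((\<lambda>t. - f t) \<longlongrightarrow> - f tbar) (at tbar within {0..<R})"
      using continuous_on_f True tbar_pos by (intro tendsto_minus) (simp add: continuous_on_def)
    then show ?thesis
      unfolding at_left_tbar[symmetric] by (rule tendsto_within_subset) (use True in auto)
  qed
  then have M: "M = - f tbar"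
    using tendsto_Sup_below_tbar tendsto_unique[OF trivial_limit_at_left_real] by (simp add: M_def)
  have bdd: "bdd_above ((\<lambda>t. - f t) ` {0..<R})"
    using neg_f_le by (intro bdd_aboveI[of _ "R - f 0"]) force
  show ?thesis unfolding beta_def M_def[symmetric]
  proof (rule antisym)
    show "Sup ((\<lambda>t. - f t) ` {0..<R}) \<le> M"
    proof (rule cSup_least)
      fix x assume "x \<in> (\<lambda>t. - f t) ` {0..<R}"
      then obtain t where t: "0 \<le> t" "t < R" "x = - f t" by auto
      show "x \<le> M"
      proof (cases "t < tbar")
        case True
        then show ?thesis using f_strict_decreasing[of t tbar] t \<open>tbar < R\<close> M by simp
      qed (use f_increasing t M in auto)
    qed (use R_pos in auto)
    show "M \<le> Sup ((\<lambda>t. - f t) ` {0..<R})"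
      unfolding M using True tbar_pos by (intro cSup_upper bdd) auto
  qed
qed (use tbar_le_R in \<open>simp add: beta_def\<close>)

lemma tendsto_beta: "(f \<longlongrightarrow> - beta) (at_left tbar)"
  using tendsto_minus[OF tendsto_Sup_below_tbar] by (simp add: beta_eq_Sup_below_tbar)

lemma beta_less_tbar: "beta < tbar"
proof -
  have "beta \<le> tbar - f 0" unfolding beta_eq_Sup_below_tbar
  proof (rule cSup_least)
    fix x assume "x \<in> (\<lambda>t. - f t) ` {0..<tbar}"
    then obtain t where "0 \<le> t" "t < tbar" "x = - f t" by auto
    then show "x \<le> tbar - f 0" using neg_f_le[of t] tbar_le_R by simp
  qed (use tbar_pos in simp)
  then show ?thesis using f0_pos by linarith
qed

lemma beta_pos: "0 < beta"
proof -
  define t where "t = (tstar + tbar) / 2"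
  have t: "tstar < t" "t < tbar" using tstar(3) by (simp_all add: t_def)
  then have "0 < - f t" using f_neg_after_tstar[of t] tbar_le_R by simp
  moreover have "- f t \<le> beta" unfolding beta_eq_Sup_below_tbar
  proof (rule cSup_upper)
    show "- f t \<in> (\<lambda>t. - f t) ` {0..<tbar}" using t tstar(2) by simp
    show "bdd_above ((\<lambda>t. - f t) ` {0..<tbar})"
      using neg_f_le tbar_le_R by (intro bdd_aboveI[of _ "tbar - f 0"]) force
  qed
  ultimately show ?thesis by simp
qed

end

theorem proposition2p3:
  fixes f f' :: "real \<Rightarrow> real" and R :: real
  assumes deriv: "\<And>t. t \<in> {0..<R} \<Longrightarrow> (f has_real_derivative f' t) (at t within {0..<R})"
    and cont: "continuous_on {0..<R} f'"
    and h1: "f 0 > 0" "f' 0 = -1"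
    and h2: "strict_mono_on {0..<R} f'" "convex_on {0..<R} f'"
    and h3: "\<exists>t\<in>{0<..<R}. f t < 0"
  defines "beta \<equiv> Sup ((\<lambda>t. - f t) ` {0..<R})"
    and "tstar \<equiv> (LEAST t. t \<in> {0..<R} \<and> f t = 0)"
    and "tau \<equiv> Sup {t \<in> {0..<R}. f t < 0}"
    and "tbar \<equiv> Sup {t \<in> {0..<R}. f' t < 0}"
  shows "(\<forall>t\<in>{0..<tbar}. f' t < 0) \<and> (\<forall>t\<in>{0..<R} - {0..<tbar}. f' t \<ge> 0)
     \<and> (0 < tstar \<and> tstar < tbar \<and> tbar \<le> tau \<and> tau \<le> R)
     \<and> ((f \<longlongrightarrow> - beta) (at_left tbar) \<and> 0 < beta \<and> beta < tbar)"
proof -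
  interpret majorant f f' R
    using deriv cont h1 h2(1) h3 by unfold_locales auto
  have defs: "beta = majorant.beta f R" "tstar = majorant.tstar f R"
    "tau = majorant.tau f R" "tbar = majorant.tbar f' R"
    unfolding assms(8-11) beta_def tstar_def tau_def tbar_def by (rule refl)+
  have "\<forall>t\<in>{0..<tbar}. f' t < 0"
    using deriv_neg_iff tbar_le_R by (auto simp: defs)
  moreover have "\<forall>t\<in>{0..<R} - {0..<tbar}. f' t \<ge> 0"
  proof
    fix t assume "t \<in> {0..<R} - {0..<tbar}"
    then show "f' t \<ge> 0" using deriv_neg_iff[of t] by (auto simp: defs)
  qed
  ultimately show ?thesis
    using tstar(2,3) tbar_le_tau tau_le_R tendsto_beta beta_pos beta_less_tbar by (simp add: defs)
qed

end
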